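(* Let $g:\mathbb{R}\to[0,1]$ be a continuous monotone link function, differentiable with $m_g\le |g'|\le M_g$ for positive constants $m_g,M_g$, such that the vector field $G(\theta)=\mathbb{E}_w[w\,g(w^{\mathsf T}\theta)]$ is well defined. Suppose there is $M_w>0$ such that for every time step $t$, $\|w_{t-d}^{t-1}\|_\infty\le M_w$ with probability one. Fix $i\in\{1,\dots,N_1\}$, let $\Theta_i\subset\mathbb{R}^N$ be a convex compact set containing $\theta_i^{\mathrm{true}}$, and let $\hat\theta_i$ be a weak solution of the variational inequality: find $\hat\theta_i\in\Theta_i$ with $\langle F^{(i)}_{W_T}(\theta),\theta-\hat\theta_i\rangle\ge0$ for all $\theta\in\Theta_i$, where $$F^{(i)}_{W_T}(\theta):=\frac1T\sum_{t=1}^T w_{t-d}^{t-1}\Big(g\big((w_{t-d}^{t-1})^{\mathsf T}\theta\big)-y_t^{(i)}\Big).$$ Let $\lambda_1$ be the smallest eigenvalue of $\mathbb{W}_{1:T}=\frac1T\sum_{t=1}^T w_{t-d}^{t-1}(w_{t-d}^{t-1})^{\mathsf T}$. Then for any $\varepsilon\in(0,1)$, with probability at least $1-\varepsilon$, $$\|\hat\theta_i-\theta_i^{\mathrm{true}}\|_2\le\frac{M_w}{m_g\lambda_1}\sqrt{\frac{N\log(2N/\varepsilon)}{T}}.$$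
   Context: Model (discrete Hawkes network / generalized linear VAR): there are $N_1$ binary time series $y_t^{(i)}\in\{0,1\}$ ($i=1,\dots,N_1$), $N_2$ real-valued time series $x_t^{(j)}$, and $N_3$ static covariates $z_1,\dots,z_{N_3}$. With memory depth $d$, let $w_{t-d}^{t-1}\in\mathbb{R}^N$, $N=1+N_3+dN_2+dN_1$, be the vector $(1,z_1,\dots,z_{N_3},x_{t-1}^{(1)},\dots,x_{t-d}^{(1)},\dots,x_{t-1}^{(N_2)},\dots,x_{t-d}^{(N_2)},y_{t-1}^{(1)},\dots,y_{t-d}^{(1)},\dots,y_{t-1}^{(N_1)},\dots,y_{t-d}^{(N_1)})^{\mathsf T}$, where observations at times $1-d,\dots,0$ are given history, and $W_T$ denotes the collection of these vectors. The model assumes that for each $i$ and each $t=1,\dots,T$, $\mathbb{P}(y_t^{(i)}=1\mid \text{past observations up to } t-1)=g((w_{t-d}^{t-1})^{\mathsf T}\theta_i^{\mathrm{true}})$ for an unknown parameter $\theta_i^{\mathrm{true}}\in\mathbb{R}^N$. *)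

theory Defs
  imports "HOL-Probability.Probability"
begin

definition dimN :: "nat \<Rightarrow> nat \<Rightarrow> nat \<Rightarrow> nat \<Rightarrow> nat" where
  "dimN N1 N2 N3 d = 1 + N3 + d * N2 + d * N1"

text \<open>k-th coordinate (0-based, k < N) of the vector w_{t-d}^{t-1}, in the order
  (1, z_1..z_N3, x^(1)_{t-1}..x^(1)_{t-d}, ..., x^(N2)_{t-1}..x^(N2)_{t-d},
   y^(1)_{t-1}..y^(1)_{t-d}, ..., y^(N1)_{t-1}..y^(N1)_{t-d}).
  Series are indexed from 1, times are integers.\<close>
definition wcoord :: "nat \<Rightarrow> nat \<Rightarrow> nat \<Rightarrow> nat \<Rightarrow> (nat \<Rightarrow> 'a \<Rightarrow> real) \<Rightarrow>
    (nat \<Rightarrow> int \<Rightarrow> 'a \<Rightarrow> real) \<Rightarrow> (nat \<Rightarrow> int \<Rightarrow> 'a \<Rightarrow> real) \<Rightarrow> int \<Rightarrow> 'a \<Rightarrow> nat \<Rightarrow> real" where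
  "wcoord N1 N2 N3 d z x y t \<omega> k =
    (if k = 0 then 1
     else if k \<le> N3 then z k \<omega>
     else if k \<le> N3 + d * N2 then
       x ((k - N3 - 1) div d + 1) (t - int ((k - N3 - 1) mod d + 1)) \<omega>
     else if k < dimN N1 N2 N3 d then
       y ((k - N3 - d * N2 - 1) div d + 1) (t - int ((k - N3 - d * N2 - 1) mod d + 1)) \<omega>
     else 0)"

text \<open>The regressor vector as an element of real^'n, where idx :: 'n \<Rightarrow> nat is a fixed
  bijection of the index type onto {..<N}.\<close>
definition wvec :: "('n::finite \<Rightarrow> nat) \<Rightarrow> nat \<Rightarrow> nat \<Rightarrow> nat \<Rightarrow> nat \<Rightarrow> (nat \<Rightarrow> 'a \<Rightarrow> real) \<Rightarrow>
    (nat \<Rightarrow> int \<Rightarrow> 'a \<Rightarrow> real) \<Rightarrow> (nat \<Rightarrow> int \<Rightarrow> 'a \<Rightarrow> real) \<Rightarrow> int \<Rightarrow> 'a \<Rightarrow> real^'n" where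
  "wvec idx N1 N2 N3 d z x y t \<omega> = (\<chi> n. wcoord N1 N2 N3 d z x y t \<omega> (idx n))"

definition obs_vars :: "nat \<Rightarrow> nat \<Rightarrow> nat \<Rightarrow> nat \<Rightarrow> (nat \<Rightarrow> 'a \<Rightarrow> real) \<Rightarrow>
    (nat \<Rightarrow> int \<Rightarrow> 'a \<Rightarrow> real) \<Rightarrow> (nat \<Rightarrow> int \<Rightarrow> 'a \<Rightarrow> real) \<Rightarrow> int \<Rightarrow> ('a \<Rightarrow> real) set" where
  "obs_vars N1 N2 N3 d z x y s =
     {z a | a. a \<in> {1..N3}}
     \<union> {x j r | j r. j \<in> {1..N2} \<and> r \<in> {1 - int d..s}}
     \<union> {y i r | i r. i \<in> {1..N1} \<and> r \<in> {1 - int d..s}}"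

definition past_sigma :: "'a measure \<Rightarrow> nat \<Rightarrow> nat \<Rightarrow> nat \<Rightarrow> nat \<Rightarrow> (nat \<Rightarrow> 'a \<Rightarrow> real) \<Rightarrow>
    (nat \<Rightarrow> int \<Rightarrow> 'a \<Rightarrow> real) \<Rightarrow> (nat \<Rightarrow> int \<Rightarrow> 'a \<Rightarrow> real) \<Rightarrow> int \<Rightarrow> 'a measure" where
  "past_sigma M N1 N2 N3 d z x y s =
     sigma (space M) {X -` B \<inter> space M | X B. X \<in> obs_vars N1 N2 N3 d z x y s \<and> B \<in> sets borel}"

definition is_eigenvalue :: "real^'n^'n \<Rightarrow> real \<Rightarrow> bool" where
  "is_eigenvalue A k \<longleftrightarrow> (\<exists>v. v \<noteq> 0 \<and> A *v v = k *\<^sub>R v)"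

definition lambda_min :: "real^'n^'n \<Rightarrow> real" where
  "lambda_min A = Min {k. is_eigenvalue A k}"

definition outer :: "real^'n \<Rightarrow> real^'n^'n" where
  "outer v = (\<chi> i j. v $ i * v $ j)"

definition Wmat :: "nat \<Rightarrow> (int \<Rightarrow> real^'n) \<Rightarrow> real^'n^'n" where
  "Wmat T w = (1 / real T) *\<^sub>R (\<Sum>t\<in>{1..int T}. outer (w t))"

definition Fop :: "(real \<Rightarrow> real) \<Rightarrow> nat \<Rightarrow> (int \<Rightarrow> real^'n) \<Rightarrow> (int \<Rightarrow> real) \<Rightarrow> real^'n \<Rightarrow> real^'n" where
  "Fop g T w yi \<theta> = (1 / real T) *\<^sub>R (\<Sum>t\<in>{1..int T}. (g (w t \<bullet> \<theta>) - yi t) *\<^sub>R w t)"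

definition l1norm :: "real^'n \<Rightarrow> real" where
  "l1norm v = (\<Sum>k\<in>UNIV. \<bar>v $ k\<bar>)"

end

(*
  At the true parameter theta0 the empirical operator is
    F(theta0) = -(1/T) sum_t (y_t - g(w_t . theta0)) w_t.
  Given the past, y_t is Bernoulli with parameter g(w_t . theta0) and w_t is known and bounded
  by M_w, so every coordinate of T F(theta0) is a martingale transform of centred Bernoulli
  increments.  Hoeffding's lemma and the exponential supermartingale (Azuma-Hoeffding) argument
  bound each coordinate, and a union bound over the N coordinates gives
  ||F(theta0)|| <= M_w sqrt(N log(2N/eps) / T) with probability at least 1 - eps.

  Deterministically, the mean value theorem and |g'| >= m_g make F strongly monotone on Theta
  with modulus m_g lambda_1, and a weak solution theta_hat of a strongly monotone variational
  inequality satisfies m_g lambda_1 ||theta_hat - theta0|| <= ||F(theta0)||.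
*)

theory Submission
  imports Defs
begin

section \<open>Hoeffding's lemma and the Azuma--Hoeffding inequality\<close>

lemma bernoulli_centered_mgf_le:
  fixes p c :: real
  assumes "0 \<le> p" "p \<le> 1"
  shows "exp (- c * p) * (1 + p * (exp c - 1)) \<le> exp (c\<^sup>2 / 8)"
proof -
  have nonneg: "exp (- c * p) * (1 + p * (exp c - 1)) \<le> exp (c\<^sup>2 / 8)"
    if "0 \<le> p" "0 \<le> c" for c p :: real
  proof -
    have pos: "0 < 1 + p * (exp c - 1)" using that by (intro add_pos_nonneg) auto
    have "- c * p + ln (1 + p * (exp c - 1)) \<le> c\<^sup>2 / 8"
      using Hoeffdings_lemma_aux[OF that(2,1)] by simp
    then have "exp (- c * p + ln (1 + p * (exp c - 1))) \<le> exp (c\<^sup>2 / 8)"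
      by (simp only: exp_le_cancel_iff)
    then show ?thesis by (simp only: exp_add exp_ln[OF pos])
  qed
  show ?thesis
  proof (cases "0 \<le> c")
    case False
    \<comment> \<open>the centred Bernoulli mgf is invariant under (p, c) \<mapsto> (1 - p, - c)\<close>
    have "exp (- c * p) * (1 + p * (exp c - 1))
        = exp (- (- c) * (1 - p)) * (1 + (1 - p) * (exp (- c) - 1))"
      by (simp add: exp_minus field_simps exp_add[symmetric])
    then show ?thesis using nonneg[of "1 - p" "- c"] assms False by simp
  qed (use nonneg assms in blast)
qed

lemma bernoulli_increment_factors_le:
  fixes c p q C :: real
  assumes c: "\<bar>c\<bar> \<le> C" and p: "0 \<le> p" "p \<le> 1" and q: "\<bar>q\<bar> \<le> 1"
  shows "\<bar>exp (- c * p)\<bar> \<le> exp C * (exp C + 1)"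
    and "\<bar>exp (- c * p) * (exp c - 1) * q\<bar> \<le> exp C * (exp C + 1)"
proof -
  have "- c * p \<le> \<bar>c\<bar> * p" using p by (intro mult_right_mono) auto
  also have "\<dots> \<le> \<bar>c\<bar> * 1" using p by (intro mult_left_mono) auto
  finally have a: "exp (- c * p) \<le> exp C" using c by simp
  have "exp c \<le> exp C" using c by simp
  then have "\<bar>exp c - 1\<bar> \<le> exp C + 1" using exp_gt_zero[of c] by arith
  then have "\<bar>exp (- c * p)\<bar> * \<bar>exp c - 1\<bar> * \<bar>q\<bar> \<le> exp C * (exp C + 1) * 1"
    using a q by (intro mult_mono) auto
  then show "\<bar>exp (- c * p) * (exp c - 1) * q\<bar> \<le> exp C * (exp C + 1)" by (simp add: abs_mult)
  have "exp C * 1 \<le> exp C * (exp C + 1)" by (intro mult_left_mono) auto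
  then show "\<bar>exp (- c * p)\<bar> \<le> exp C * (exp C + 1)"
    unfolding abs_exp_cancel using a by linarith
qed

lemma integrable_mult_AE_bounded:
  fixes f g :: "'a \<Rightarrow> real"
  assumes "integrable M f" and "g \<in> borel_measurable M" and "AE x in M. \<bar>g x\<bar> \<le> K"
  shows "integrable M (\<lambda>x. f x * g x)"
proof (rule Bochner_Integration.integrable_bound[of M "\<lambda>x. \<bar>K\<bar> * f x"])
  show "AE x in M. norm (f x * g x) \<le> norm (\<bar>K\<bar> * f x)"
    using assms(3)
  proof eventually_elim
    case (elim x)
    have "\<bar>g x\<bar> * \<bar>f x\<bar> \<le> \<bar>K\<bar> * \<bar>f x\<bar>" using elim by (intro mult_right_mono) auto
    then show ?case by (simp add: abs_mult mult.commute)
  qed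
qed (use assms in auto)

lemma (in prob_space) integral_mult_indicator_cond_prob:
  fixes f Y :: "'a \<Rightarrow> real"
  assumes "subalgebra M F" and "f \<in> borel_measurable F"
    and "Y \<in> borel_measurable M" and "p \<in> borel_measurable M"
    and "integrable M (\<lambda>\<omega>. f \<omega> * indicator {\<omega> \<in> space M. Y \<omega> = 1} \<omega>)"
    and "AE \<omega> in M. real_cond_exp M F (indicator {\<omega> \<in> space M. Y \<omega> = 1}) \<omega> = p \<omega>"
  shows "(\<integral>\<omega>. f \<omega> * indicator {\<omega> \<in> space M. Y \<omega> = 1} \<omega> \<partial>M) = (\<integral>\<omega>. f \<omega> * p \<omega> \<partial>M)"
proof -
  interpret sigma_finite_subalgebra M F
    using assms(1) by (intro finite_measure_subalgebra_is_sigma_finite)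
      (simp add: finite_measure_subalgebra_def finite_measure_subalgebra_axioms_def finite_measure_axioms)
  have [measurable]: "Y \<in> borel_measurable M" "p \<in> borel_measurable M" by fact+
  have "indicator {\<omega> \<in> space M. Y \<omega> = 1} \<in> borel_measurable M" by measurable
  have "(\<integral>\<omega>. f \<omega> * indicator {\<omega> \<in> space M. Y \<omega> = 1} \<omega> \<partial>M)
      = (\<integral>\<omega>. f \<omega> * real_cond_exp M F (indicator {\<omega> \<in> space M. Y \<omega> = 1}) \<omega> \<partial>M)"
    using assms(2,5) \<open>indicator _ \<in> borel_measurable M\<close> by (intro real_cond_exp_intg(2)[symmetric])
  also have "\<dots> = (\<integral>\<omega>. f \<omega> * p \<omega> \<partial>M)"
    using assms(6) measurable_from_subalg[OF assms(1,2)] by (intro integral_cong_AE) auto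
  finally show ?thesis .
qed

text \<open>Conditionally on F, the increment c (Y - p) is a centred Bernoulli variable scaled by c,
  so Hoeffding's lemma bounds its conditional moment generating function by exp (C^2 / 8).\<close>
lemma (in prob_space) integral_exp_bernoulli_increment_le:
  fixes S c p Y :: "'a \<Rightarrow> real"
  assumes sub: "subalgebra M F"
    and [measurable]: "S \<in> borel_measurable F" "c \<in> borel_measurable F" "p \<in> borel_measurable F"
    and [measurable]: "Y \<in> borel_measurable M"
    and int_S: "integrable M (\<lambda>\<omega>. exp (S \<omega>))"
    and c: "AE \<omega> in M. \<bar>c \<omega>\<bar> \<le> C"
    and p: "\<And>\<omega>. \<omega> \<in> space M \<Longrightarrow> 0 \<le> p \<omega> \<and> p \<omega> \<le> 1"
    and Y: "\<And>\<omega>. \<omega> \<in> space M \<Longrightarrow> Y \<omega> \<in> {0, 1}"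
    and cond_prob: "AE \<omega> in M. real_cond_exp M F (indicator {\<omega> \<in> space M. Y \<omega> = 1}) \<omega> = p \<omega>"
  shows "integrable M (\<lambda>\<omega>. exp (S \<omega> + c \<omega> * (Y \<omega> - p \<omega>)))"
    and "(\<integral>\<omega>. exp (S \<omega> + c \<omega> * (Y \<omega> - p \<omega>)) \<partial>M) \<le> exp (C\<^sup>2 / 8) * (\<integral>\<omega>. exp (S \<omega>) \<partial>M)"
proof -
  define a where "a \<omega> = exp (- c \<omega> * p \<omega>)" for \<omega>
  define b where "b \<omega> = a \<omega> * (exp (c \<omega>) - 1)" for \<omega>
  define ind :: "'a \<Rightarrow> real" where "ind = indicator {\<omega> \<in> space M. Y \<omega> = 1}"
  have ab_F [measurable]: "a \<in> borel_measurable F" "b \<in> borel_measurable F"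
    unfolding a_def b_def by measurable
  have [measurable]: "a \<in> borel_measurable M" "b \<in> borel_measurable M" "p \<in> borel_measurable M"
    using ab_F assms(4) by (auto intro: measurable_from_subalg[OF sub])
  have [measurable]: "ind \<in> borel_measurable M" unfolding ind_def by measurable
  \<comment> \<open>exp (c Y) = 1 + (exp c - 1) Y because Y only takes the values 0 and 1\<close>
  have split: "exp (S \<omega> + c \<omega> * (Y \<omega> - p \<omega>)) = exp (S \<omega>) * a \<omega> + exp (S \<omega>) * b \<omega> * ind \<omega>"
    if "\<omega> \<in> space M" for \<omega>
    using Y[OF that] by (auto simp: a_def b_def ind_def that exp_add[symmetric] algebra_simps)
  define K where "K = exp C * (exp C + 1)"
  have bounds: "AE \<omega> in M. \<bar>a \<omega>\<bar> \<le> K \<and> \<bar>b \<omega> * q \<omega>\<bar> \<le> K"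
    if q: "\<And>\<omega>. \<omega> \<in> space M \<Longrightarrow> \<bar>q \<omega>\<bar> \<le> 1" for q :: "'a \<Rightarrow> real"
    using c AE_space
  proof eventually_elim
    case (elim \<omega>)
    show ?case
      using bernoulli_increment_factors_le[OF elim(1) _ _ q[OF elim(2)]] p[OF elim(2)]
      by (simp add: K_def a_def b_def)
  qed
  have int_a: "integrable M (\<lambda>\<omega>. exp (S \<omega>) * a \<omega>)"
    using bounds[of "\<lambda>_. 1"] by (intro integrable_mult_AE_bounded[OF int_S]) auto
  have int_bq: "integrable M (\<lambda>\<omega>. exp (S \<omega>) * (b \<omega> * q \<omega>))"
    if [measurable]: "q \<in> borel_measurable M" and "\<And>\<omega>. \<omega> \<in> space M \<Longrightarrow> \<bar>q \<omega>\<bar> \<le> 1" for q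
    using bounds[of q, OF that(2)] by (intro integrable_mult_AE_bounded[OF int_S]) auto
  have int_ind: "integrable M (\<lambda>\<omega>. exp (S \<omega>) * b \<omega> * ind \<omega>)"
    using int_bq[of ind] by (simp add: ind_def mult.assoc)
  have int_p: "integrable M (\<lambda>\<omega>. exp (S \<omega>) * b \<omega> * p \<omega>)"
    using int_bq[of p] p by (simp add: mult.assoc)
  show "integrable M (\<lambda>\<omega>. exp (S \<omega> + c \<omega> * (Y \<omega> - p \<omega>)))"
    using int_a int_ind by (simp add: Bochner_Integration.integrable_cong[OF refl split])
  have "(\<integral>\<omega>. exp (S \<omega> + c \<omega> * (Y \<omega> - p \<omega>)) \<partial>M)
      = (\<integral>\<omega>. exp (S \<omega>) * a \<omega> \<partial>M) + (\<integral>\<omega>. exp (S \<omega>) * b \<omega> * ind \<omega> \<partial>M)"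
    using int_a int_ind by (simp add: Bochner_Integration.integral_cong[OF refl split])
  also have "(\<integral>\<omega>. exp (S \<omega>) * b \<omega> * ind \<omega> \<partial>M) = (\<integral>\<omega>. exp (S \<omega>) * b \<omega> * p \<omega> \<partial>M)"
    using int_ind cond_prob unfolding ind_def by (intro integral_mult_indicator_cond_prob[OF sub]) auto
  also have "(\<integral>\<omega>. exp (S \<omega>) * a \<omega> \<partial>M) + \<dots> = (\<integral>\<omega>. exp (S \<omega>) * (a \<omega> + b \<omega> * p \<omega>) \<partial>M)"
    using int_a int_p by (simp add: algebra_simps)
  also have "\<dots> \<le> (\<integral>\<omega>. exp (S \<omega>) * exp (C\<^sup>2 / 8) \<partial>M)"
  proof (rule integral_mono_AE)
    show "AE \<omega> in M. exp (S \<omega>) * (a \<omega> + b \<omega> * p \<omega>) \<le> exp (S \<omega>) * exp (C\<^sup>2 / 8)"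
      using c AE_space
    proof eventually_elim
      case (elim \<omega>)
      have "a \<omega> + b \<omega> * p \<omega> = exp (- c \<omega> * p \<omega>) * (1 + p \<omega> * (exp (c \<omega>) - 1))"
        by (simp add: a_def b_def algebra_simps)
      also have "\<dots> \<le> exp ((c \<omega>)\<^sup>2 / 8)"
        using p[OF elim(2)] by (intro bernoulli_centered_mgf_le) auto
      also have "\<dots> \<le> exp (C\<^sup>2 / 8)" using power_mono[OF elim(1) abs_ge_zero, of 2] by simp
      finally show ?case by (simp add: mult_left_mono)
    qed
  qed (use int_a int_p int_S in \<open>simp_all add: algebra_simps\<close>)
  finally show "(\<integral>\<omega>. exp (S \<omega> + c \<omega> * (Y \<omega> - p \<omega>)) \<partial>M) \<le> exp (C\<^sup>2 / 8) * (\<integral>\<omega>. exp (S \<omega>) \<partial>M)"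
    by (simp add: mult.commute)
qed

locale conditional_bernoulli_process = prob_space M for M :: "'a measure" +
  fixes F :: "int \<Rightarrow> 'a measure" and Y p :: "int \<Rightarrow> 'a \<Rightarrow> real" and T :: nat
  assumes subalgebra_past: "\<And>t. t \<in> {1..int T} \<Longrightarrow> subalgebra M (F (t - 1))"
    and Y_measurable [measurable]: "\<And>t. t \<in> {1..int T} \<Longrightarrow> Y t \<in> borel_measurable M"
    and Y_adapted: "\<And>s t. 1 \<le> s \<Longrightarrow> s < t \<Longrightarrow> t \<le> int T \<Longrightarrow> Y s \<in> borel_measurable (F (t - 1))"
    and Y_binary: "\<And>t \<omega>. t \<in> {1..int T} \<Longrightarrow> \<omega> \<in> space M \<Longrightarrow> Y t \<omega> \<in> {0, 1}"
    and p_predictable: "\<And>s t. 1 \<le> s \<Longrightarrow> s \<le> t \<Longrightarrow> t \<le> int T \<Longrightarrow> p s \<in> borel_measurable (F (t - 1))"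
    and p_range: "\<And>t \<omega>. t \<in> {1..int T} \<Longrightarrow> \<omega> \<in> space M \<Longrightarrow> 0 \<le> p t \<omega> \<and> p t \<omega> \<le> 1"
    and cond_prob: "\<And>t. t \<in> {1..int T} \<Longrightarrow>
      AE \<omega> in M. real_cond_exp M (F (t - 1)) (indicator {\<omega> \<in> space M. Y t \<omega> = 1}) \<omega> = p t \<omega>"
begin

lemma integral_exp_weighted_sum_le:
  assumes c_predictable: "\<And>s t. 1 \<le> s \<Longrightarrow> s \<le> t \<Longrightarrow> t \<le> int T \<Longrightarrow> c s \<in> borel_measurable (F (t - 1))"
    and c_bound: "\<And>t. t \<in> {1..int T} \<Longrightarrow> AE \<omega> in M. \<bar>c t \<omega>\<bar> \<le> C"
    and "n \<le> T"
  shows "integrable M (\<lambda>\<omega>. exp (\<Sum>t\<in>{1..int n}. c t \<omega> * (Y t \<omega> - p t \<omega>)))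
    \<and> (\<integral>\<omega>. exp (\<Sum>t\<in>{1..int n}. c t \<omega> * (Y t \<omega> - p t \<omega>)) \<partial>M) \<le> exp (real n * C\<^sup>2 / 8)"
  using \<open>n \<le> T\<close>
proof (induction n)
  case 0
  then show ?case by (simp add: prob_space)
next
  case (Suc n)
  define t where "t = int n + 1"
  have t: "t \<in> {1..int T}" "t - 1 = int n" using Suc.prems by (auto simp: t_def)
  define S where "S \<omega> = (\<Sum>s\<in>{1..int n}. c s \<omega> * (Y s \<omega> - p s \<omega>))" for \<omega>
  have S_past: "S \<in> borel_measurable (F (t - 1))" unfolding S_def
  proof (intro borel_measurable_sum)
    fix s assume "s \<in> {1..int n}"
    then have "1 \<le> s" "s < t" "t \<le> int T" using t(1) by (auto simp: t_def)
    then have [measurable]: "Y s \<in> borel_measurable (F (t - 1))" "p s \<in> borel_measurable (F (t - 1))"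
      "c s \<in> borel_measurable (F (t - 1))"
      by (auto intro: Y_adapted p_predictable c_predictable)
    show "(\<lambda>\<omega>. c s \<omega> * (Y s \<omega> - p s \<omega>)) \<in> borel_measurable (F (t - 1))" by measurable
  qed
  have sum_Suc: "(\<Sum>s\<in>{1..int (Suc n)}. c s \<omega> * (Y s \<omega> - p s \<omega>)) = S \<omega> + c t \<omega> * (Y t \<omega> - p t \<omega>)" for \<omega>
  proof -
    have "{1..int (Suc n)} = insert t {1..int n}" by (auto simp: t_def)
    then show ?thesis by (simp add: S_def t_def add.commute)
  qed
  have IH: "integrable M (\<lambda>\<omega>. exp (S \<omega>))" "(\<integral>\<omega>. exp (S \<omega>) \<partial>M) \<le> exp (real n * C\<^sup>2 / 8)"
    using Suc by (simp_all add: S_def)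
  have "c t \<in> borel_measurable (F (t - 1))" "p t \<in> borel_measurable (F (t - 1))"
    using t(1) by (auto intro!: c_predictable p_predictable)
  note step = integral_exp_bernoulli_increment_le[OF subalgebra_past[OF t(1)] S_past this
      Y_measurable[OF t(1)] IH(1) c_bound[OF t(1)] p_range[OF t(1)] Y_binary[OF t(1)] cond_prob[OF t(1)]]
  have "(\<integral>\<omega>. exp (S \<omega> + c t \<omega> * (Y t \<omega> - p t \<omega>)) \<partial>M) \<le> exp (C\<^sup>2 / 8) * (\<integral>\<omega>. exp (S \<omega>) \<partial>M)"
    by (rule step(2))
  also have "\<dots> \<le> exp (C\<^sup>2 / 8) * exp (real n * C\<^sup>2 / 8)" using IH(2) by (intro mult_left_mono) auto
  also have "\<dots> = exp (real (Suc n) * C\<^sup>2 / 8)" by (simp add: exp_add[symmetric] field_simps)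
  finally show ?case using step(1) unfolding sum_Suc by simp
qed

lemma borel_measurable_weighted_sum:
  assumes "\<And>s t. 1 \<le> s \<Longrightarrow> s \<le> t \<Longrightarrow> t \<le> int T \<Longrightarrow> c s \<in> borel_measurable (F (t - 1))"
  shows "(\<lambda>\<omega>. \<Sum>t\<in>{1..int T}. c t \<omega> * (Y t \<omega> - p t \<omega>)) \<in> borel_measurable M"
proof (intro borel_measurable_sum)
  fix t assume t: "t \<in> {1..int T}"
  then have [measurable]: "c t \<in> borel_measurable M" "p t \<in> borel_measurable M" "Y t \<in> borel_measurable M"
    by (auto intro!: measurable_from_subalg[OF subalgebra_past] assms p_predictable)
  show "(\<lambda>\<omega>. c t \<omega> * (Y t \<omega> - p t \<omega>)) \<in> borel_measurable M" by measurable
qed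

text \<open>Azuma--Hoeffding inequality, via the Chernoff bound with the optimal parameter
  s = 4 a / (T C^2).\<close>
lemma weighted_sum_tail_le:
  assumes c_predictable: "\<And>s t. 1 \<le> s \<Longrightarrow> s \<le> t \<Longrightarrow> t \<le> int T \<Longrightarrow> c s \<in> borel_measurable (F (t - 1))"
    and c_bound: "\<And>t. t \<in> {1..int T} \<Longrightarrow> AE \<omega> in M. \<bar>c t \<omega>\<bar> \<le> C"
    and "0 < C" and "0 < a"
  shows "prob {\<omega> \<in> space M. a \<le> (\<Sum>t\<in>{1..int T}. c t \<omega> * (Y t \<omega> - p t \<omega>))}
    \<le> exp (- 2 * a\<^sup>2 / (real T * C\<^sup>2))"
proof (cases "T = 0")
  case False
  define Z where "Z \<omega> = (\<Sum>t\<in>{1..int T}. c t \<omega> * (Y t \<omega> - p t \<omega>))" for \<omega>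
  define s where "s = 4 * a / (real T * C\<^sup>2)"
  have "0 < s" using False assms(3,4) by (simp add: s_def)
  have [measurable]: "Z \<in> borel_measurable M"
    unfolding Z_def using c_predictable by (rule borel_measurable_weighted_sum)
  have "integrable M (\<lambda>\<omega>. exp (\<Sum>t\<in>{1..int T}. s * c t \<omega> * (Y t \<omega> - p t \<omega>)))
    \<and> (\<integral>\<omega>. exp (\<Sum>t\<in>{1..int T}. s * c t \<omega> * (Y t \<omega> - p t \<omega>)) \<partial>M) \<le> exp (real T * (s * C)\<^sup>2 / 8)"
  proof (rule integral_exp_weighted_sum_le)
    show "(\<lambda>\<omega>. s * c t \<omega>) \<in> borel_measurable (F (u - 1))" if "1 \<le> t" "t \<le> u" "u \<le> int T" for t u
      using c_predictable[OF that] by measurable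
    show "AE \<omega> in M. \<bar>s * c t \<omega>\<bar> \<le> s * C" if "t \<in> {1..int T}" for t
      using c_bound[OF that] by eventually_elim (use \<open>0 < s\<close> in \<open>simp add: abs_mult\<close>)
  qed simp
  moreover have "(\<Sum>t\<in>{1..int T}. s * c t \<omega> * (Y t \<omega> - p t \<omega>)) = s * Z \<omega>" for \<omega>
    by (simp add: Z_def sum_distrib_left mult.assoc)
  ultimately have int: "integrable M (\<lambda>\<omega>. exp (s * Z \<omega>))"
    and mgf: "(\<integral>\<omega>. exp (s * Z \<omega>) \<partial>M) \<le> exp (real T * (s * C)\<^sup>2 / 8)" by simp_all
  have "prob {\<omega> \<in> space M. a \<le> Z \<omega>} = prob {\<omega> \<in> space M. exp (s * a) \<le> exp (s * Z \<omega>)}"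
    using \<open>0 < s\<close> by simp
  also have "\<dots> \<le> (\<integral>\<omega>. exp (s * Z \<omega>) \<partial>M) / exp (s * a)"
    using int by (intro integral_Markov_inequality_measure[where A = "space M"]) auto
  also have "\<dots> \<le> exp (real T * (s * C)\<^sup>2 / 8) / exp (s * a)"
    using mgf by (simp add: divide_right_mono)
  also have "\<dots> = exp (- 2 * a\<^sup>2 / (real T * C\<^sup>2))"
    using False assms(3) by (simp add: s_def exp_diff[symmetric] power2_eq_square field_simps)
  finally show ?thesis by (simp add: Z_def)
qed simp

lemma weighted_sum_abs_tail_le:
  assumes "\<And>s t. 1 \<le> s \<Longrightarrow> s \<le> t \<Longrightarrow> t \<le> int T \<Longrightarrow> c s \<in> borel_measurable (F (t - 1))"
    and "\<And>t. t \<in> {1..int T} \<Longrightarrow> AE \<omega> in M. \<bar>c t \<omega>\<bar> \<le> C"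
    and "0 < C" and "0 < a"
  shows "prob {\<omega> \<in> space M. a \<le> \<bar>\<Sum>t\<in>{1..int T}. c t \<omega> * (Y t \<omega> - p t \<omega>)\<bar>}
    \<le> 2 * exp (- 2 * a\<^sup>2 / (real T * C\<^sup>2))"
proof -
  define Z where "Z \<omega> = (\<Sum>t\<in>{1..int T}. c t \<omega> * (Y t \<omega> - p t \<omega>))" for \<omega>
  have [measurable]: "Z \<in> borel_measurable M"
    unfolding Z_def using assms(1) by (rule borel_measurable_weighted_sum)
  have neg: "prob {\<omega> \<in> space M. a \<le> - Z \<omega>} \<le> exp (- 2 * a\<^sup>2 / (real T * C\<^sup>2))"
    using weighted_sum_tail_le[of "\<lambda>t \<omega>. - c t \<omega>" C a] assms
    by (simp add: Z_def sum_negf[symmetric])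
  have pos: "prob {\<omega> \<in> space M. a \<le> Z \<omega>} \<le> exp (- 2 * a\<^sup>2 / (real T * C\<^sup>2))"
    using weighted_sum_tail_le[OF assms] by (simp add: Z_def)
  have "{\<omega> \<in> space M. a \<le> \<bar>Z \<omega>\<bar>} = {\<omega> \<in> space M. a \<le> Z \<omega>} \<union> {\<omega> \<in> space M. a \<le> - Z \<omega>}"
    by auto
  then have "prob {\<omega> \<in> space M. a \<le> \<bar>Z \<omega>\<bar>} \<le> prob {\<omega> \<in> space M. a \<le> Z \<omega>} + prob {\<omega> \<in> space M. a \<le> - Z \<omega>}"
    by (simp add: measure_subadditive emeasure_finite)
  then show ?thesis using pos neg by (simp add: Z_def)
qed

end

section \<open>The smallest eigenvalue of a symmetric matrix\<close>

lemma nonneg_quadratic_imp_linear_coeff_zero: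
  fixes m d :: real
  assumes "\<And>s. 0 \<le> s * m + s\<^sup>2 * d"
  shows "m = 0"
proof (rule ccontr)
  assume "m \<noteq> 0"
  define s where "s = - m / (\<bar>d\<bar> + 1)"
  have "s\<^sup>2 * d \<le> s\<^sup>2 * \<bar>d\<bar>" by (simp add: mult_left_mono)
  also have "\<dots> = m\<^sup>2 / (\<bar>d\<bar> + 1) * (\<bar>d\<bar> / (\<bar>d\<bar> + 1))"
    by (simp add: s_def power_divide power2_eq_square)
  also have "\<dots> < m\<^sup>2 / (\<bar>d\<bar> + 1) * 1"
    using \<open>m \<noteq> 0\<close> by (intro mult_strict_left_mono) auto
  also have "\<dots> = - (s * m)" by (simp add: s_def power2_eq_square)
  finally show False using assms[of s] by simp
qed

lemma symmetric_matrix_inner_commute: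
  fixes A :: "real^'n^'n"
  assumes "transpose A = A"
  shows "(A *v x) \<bullet> y = x \<bullet> (A *v y)"
  by (metis assms dot_lmul_matrix transpose_matrix_vector)

lemma finite_eigenvalues_symmetric:
  fixes A :: "real^'n^'n"
  assumes sym: "transpose A = A"
  shows "finite {k. is_eigenvalue A k}"
proof -
  define S where "S = {k. is_eigenvalue A k}"
  define v where "v k = (SOME u. u \<noteq> 0 \<and> A *v u = k *\<^sub>R u)" for k
  have v: "v k \<noteq> 0 \<and> A *v v k = k *\<^sub>R v k" if "k \<in> S" for k
    using that unfolding S_def is_eigenvalue_def v_def by (metis (mono_tags, lifting) someI_ex mem_Collect_eq)
  have inj: "inj_on v S"
  proof (rule inj_onI)
    fix k1 k2 assume "k1 \<in> S" "k2 \<in> S" "v k1 = v k2"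
    then have "k1 *\<^sub>R v k1 = k2 *\<^sub>R v k1" using v by metis
    then show "k1 = k2" using v \<open>k1 \<in> S\<close> by simp
  qed
  have "pairwise orthogonal (v ` S)"
  proof (clarsimp simp: pairwise_def orthogonal_def)
    fix k1 k2 assume k: "k1 \<in> S" "k2 \<in> S" "v k1 \<noteq> v k2"
    have "k1 * (v k1 \<bullet> v k2) = (A *v v k1) \<bullet> v k2" using v[OF k(1)] by simp
    also have "\<dots> = v k1 \<bullet> (A *v v k2)" by (rule symmetric_matrix_inner_commute[OF sym])
    also have "\<dots> = k2 * (v k1 \<bullet> v k2)" using v[OF k(2)] by simp
    finally show "v k1 \<bullet> v k2 = 0" using k by auto
  qed
  moreover have "0 \<notin> v ` S" using v by auto
  ultimately have "independent (v ` S)" by (rule pairwise_orthogonal_independent)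
  then have "finite (v ` S)" using independent_bound by blast
  then show ?thesis using inj finite_imageD S_def by blast
qed

text \<open>The minimum of the quadratic form on the unit sphere is an eigenvalue: at a minimiser u,
  perturbing u in the direction of the residual r = A u - \<mu> u changes the form to first order
  by 2 s (r \<bullet> r), which must therefore vanish.\<close>
lemma symmetric_matrix_has_eigenvalue_below_quadratic_form:
  fixes A :: "real^'n^'n"
  assumes sym: "transpose A = A"
  shows "\<exists>\<mu>. is_eigenvalue A \<mu> \<and> (\<forall>x. \<mu> * (norm x)\<^sup>2 \<le> x \<bullet> (A *v x))"
proof -
  define q where "q x = x \<bullet> (A *v x)" for x :: "real^'n"
  have "continuous_on (sphere 0 1) q" unfolding q_def
    by (intro continuous_intros linear_continuous_on) auto
  moreover have "sphere (0::real^'n) 1 \<noteq> {}" using vector_choose_size[of 1] by auto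
  ultimately obtain u where u: "norm u = 1" and u_min: "\<And>y. norm y = 1 \<Longrightarrow> q u \<le> q y"
    using continuous_attains_inf[OF compact_sphere] by (metis dist_0_norm mem_sphere)
  define \<mu> where "\<mu> = q u"
  have low: "\<mu> * (norm x)\<^sup>2 \<le> q x" for x
  proof (cases "x = 0")
    case False
    have "\<mu> \<le> q ((1 / norm x) *\<^sub>R x)" using False u_min \<mu>_def by simp
    also have "\<dots> = q x / (norm x)\<^sup>2"
      by (simp add: q_def matrix_vector_mult_scaleR power2_eq_square divide_inverse)
    finally show ?thesis using False by (simp add: field_simps)
  qed (simp add: q_def)
  define r where "r = A *v u - \<mu> *\<^sub>R u"
  have "0 \<le> s * (2 * (r \<bullet> r)) + s\<^sup>2 * (q r - \<mu> * (norm r)\<^sup>2)" for s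
  proof -
    have "q (u + s *\<^sub>R r) = q u + 2 * s * (r \<bullet> (A *v u)) + s\<^sup>2 * q r"
      using symmetric_matrix_inner_commute[OF sym, of r u] unfolding q_def
      by (simp add: matrix_vector_right_distrib matrix_vector_mult_scaleR inner_add_left
          inner_add_right power2_eq_square algebra_simps inner_commute)
    moreover have "(norm (u + s *\<^sub>R r))\<^sup>2 = 1 + 2 * s * (u \<bullet> r) + s\<^sup>2 * (norm r)\<^sup>2"
    proof -
      have "u \<bullet> u = 1" using u by (simp add: dot_square_norm)
      then show ?thesis unfolding power2_norm_eq_inner
        by (simp add: inner_add_left inner_add_right power2_eq_square algebra_simps inner_commute)
    qed
    moreover have "r \<bullet> (A *v u) - \<mu> * (u \<bullet> r) = r \<bullet> r"
      by (simp add: r_def inner_diff_left inner_diff_right inner_commute algebra_simps)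
    ultimately show ?thesis
      using low[of "u + s *\<^sub>R r"] by (simp add: \<mu>_def algebra_simps)
  qed
  then have "2 * (r \<bullet> r) = 0" by (rule nonneg_quadratic_imp_linear_coeff_zero)
  then have "A *v u = \<mu> *\<^sub>R u" by (simp add: r_def)
  moreover have "u \<noteq> 0" using u by auto
  ultimately show ?thesis using low unfolding is_eigenvalue_def q_def by blast
qed

lemma lambda_min_mult_norm_square_le:
  fixes A :: "real^'n^'n"
  assumes sym: "transpose A = A"
  shows "lambda_min A * (norm x)\<^sup>2 \<le> x \<bullet> (A *v x)"
proof -
  obtain \<mu> where \<mu>: "is_eigenvalue A \<mu>" "\<And>x. \<mu> * (norm x)\<^sup>2 \<le> x \<bullet> (A *v x)"
    using symmetric_matrix_has_eigenvalue_below_quadratic_form[OF sym] by blast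
  have "lambda_min A \<le> \<mu>" unfolding lambda_min_def
    using finite_eigenvalues_symmetric[OF sym] \<mu>(1) by (intro Min_le) auto
  then have "lambda_min A * (norm x)\<^sup>2 \<le> \<mu> * (norm x)\<^sup>2" by (intro mult_right_mono) auto
  then show ?thesis using \<mu>(2)[of x] by linarith
qed

lemma outer_mult_vector: "outer v *v x = (v \<bullet> x) *\<^sub>R v"
  by (simp add: vec_eq_iff outer_def matrix_vector_mult_def inner_vec_def sum_distrib_left algebra_simps)

lemma sum_matrix_vector_mult:
  fixes A :: "'b \<Rightarrow> real^'n^'m"
  shows "finite S \<Longrightarrow> (\<Sum>t\<in>S. A t) *v x = (\<Sum>t\<in>S. A t *v x)"
  by (induct rule: finite_induct) (auto simp: matrix_vector_mult_add_rdistrib)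

lemma Wmat_quadratic_form:
  "x \<bullet> (Wmat T w *v x) = (1 / real T) * (\<Sum>t\<in>{1..int T}. (w t \<bullet> x)\<^sup>2)"
  by (simp add: Wmat_def scaleR_matrix_vector_assoc[symmetric] sum_matrix_vector_mult outer_mult_vector
      inner_sum_right power2_eq_square inner_commute)

lemma transpose_Wmat: "transpose (Wmat T w) = Wmat T w"
  by (simp add: vec_eq_iff transpose_def Wmat_def outer_def mult.commute)

section \<open>Strongly monotone variational inequalities\<close>

lemma strongly_monotone_weak_solution_dist_le:
  fixes F :: "'v::real_inner \<Rightarrow> 'v"
  assumes "convex \<Theta>" and "\<theta>s \<in> \<Theta>" and "\<theta>h \<in> \<Theta>"
    and strong: "\<And>a b. a \<in> \<Theta> \<Longrightarrow> b \<in> \<Theta> \<Longrightarrow> \<kappa> * (norm (a - b))\<^sup>2 \<le> (F a - F b) \<bullet> (a - b)"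
    and weak: "\<And>\<theta>. \<theta> \<in> \<Theta> \<Longrightarrow> 0 \<le> F \<theta> \<bullet> (\<theta> - \<theta>h)"
  shows "\<kappa> * norm (\<theta>h - \<theta>s) \<le> norm (F \<theta>s)"
proof -
  define D where "D = \<theta>s - \<theta>h"
  have "z * (\<kappa> * (norm D)\<^sup>2) \<le> F \<theta>s \<bullet> D" if z: "0 < z" "z < 1" for z
  proof -
    define \<theta> where "\<theta> = \<theta>s - z *\<^sub>R D"
    have "\<theta> = z *\<^sub>R \<theta>h + (1 - z) *\<^sub>R \<theta>s" by (simp add: \<theta>_def D_def algebra_simps)
    then have \<theta>: "\<theta> \<in> \<Theta>" using assms(1-3) z by (simp add: convexD)
    have "0 \<le> F \<theta> \<bullet> ((1 - z) *\<^sub>R D)"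
      using weak[OF \<theta>] by (simp add: \<theta>_def D_def algebra_simps)
    then have "0 \<le> F \<theta> \<bullet> D" using z by (simp add: zero_le_mult_iff)
    have "z * (z * (\<kappa> * (norm D)\<^sup>2)) = \<kappa> * (norm (\<theta>s - \<theta>))\<^sup>2"
      using z by (simp add: \<theta>_def power2_eq_square)
    also have "\<dots> \<le> (F \<theta>s - F \<theta>) \<bullet> (\<theta>s - \<theta>)" by (rule strong[OF assms(2) \<theta>])
    also have "\<dots> = z * (F \<theta>s \<bullet> D - F \<theta> \<bullet> D)" by (simp add: \<theta>_def inner_diff_left)
    also have "\<dots> \<le> z * (F \<theta>s \<bullet> D)" using \<open>0 \<le> F \<theta> \<bullet> D\<close> z by (simp add: mult_left_mono)
    finally show ?thesis using z by simp
  qed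
  then have "\<kappa> * (norm D)\<^sup>2 \<le> F \<theta>s \<bullet> D" by (rule field_le_mult_one_interval)
  also have "\<dots> \<le> norm (F \<theta>s) * norm D" by (rule norm_cauchy_schwarz)
  finally have "\<kappa> * norm D * norm D \<le> norm (F \<theta>s) * norm D" by (simp add: power2_eq_square)
  then show ?thesis
    by (cases "D = 0") (simp_all add: D_def norm_minus_commute)
qed

lemma mono_deriv_lower_bound_imp_strongly_monotone:
  fixes g g' :: "real \<Rightarrow> real"
  assumes mono: "mono g" and deriv: "\<And>u. (g has_real_derivative g' u) (at u)"
    and lower: "\<And>u. \<bar>u\<bar> \<le> R \<Longrightarrow> m \<le> \<bar>g' u\<bar>" and "\<bar>a\<bar> \<le> R" "\<bar>b\<bar> \<le> R"
  shows "m * (a - b)\<^sup>2 \<le> (g a - g b) * (a - b)"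
proof -
  have ordered: "m * (a - b)\<^sup>2 \<le> (g a - g b) * (a - b)" if "b < a" "\<bar>a\<bar> \<le> R" "\<bar>b\<bar> \<le> R" for a b
  proof -
    obtain u where u: "b < u" "u < a" "g a - g b = (a - b) * g' u"
      using MVT2[OF \<open>b < a\<close>] deriv by blast
    have "g b \<le> g a" using mono \<open>b < a\<close> by (simp add: monoD)
    then have "0 \<le> (a - b) * g' u" using u by simp
    then have "0 \<le> g' u" using \<open>b < a\<close> by (simp add: zero_le_mult_iff)
    moreover have "m \<le> \<bar>g' u\<bar>" using u that by (intro lower) auto
    ultimately have "m * (a - b)\<^sup>2 \<le> g' u * (a - b)\<^sup>2" by (intro mult_right_mono) auto
    also have "\<dots> = (g a - g b) * (a - b)" using u by (simp add: power2_eq_square)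
    finally show ?thesis .
  qed
  consider "b < a" | "a < b" | "a = b" by linarith
  then show ?thesis
  proof cases
    case 1
    then show ?thesis using ordered assms(4,5) by blast
  next
    case 2
    then have "m * (b - a)\<^sup>2 \<le> (g b - g a) * (b - a)" using ordered assms(4,5) by blast
    then show ?thesis by (simp add: power2_commute algebra_simps)
  qed simp
qed

lemma Fop_diff_inner:
  "(Fop g T w yv a - Fop g T w yv b) \<bullet> x
    = (1 / real T) * (\<Sum>t\<in>{1..int T}. (g (w t \<bullet> a) - g (w t \<bullet> b)) * (w t \<bullet> x))"
  unfolding Fop_def
  by (simp add: scaleR_diff_right[symmetric] sum_subtractf[symmetric] inner_sum_left algebra_simps)

lemma Fop_nth:
  "Fop g T w yv \<theta> $ n = (1 / real T) * (\<Sum>t\<in>{1..int T}. (g (w t \<bullet> \<theta>) - yv t) * w t $ n)"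
  by (simp add: Fop_def)

lemma Fop_strongly_monotone:
  fixes w :: "int \<Rightarrow> real^'n"
  assumes "mono g" and "\<And>u. (g has_real_derivative g' u) (at u)"
    and "\<And>u. \<bar>u\<bar> \<le> R \<Longrightarrow> m \<le> \<bar>g' u\<bar>" and "0 \<le> m"
    and a: "\<And>t. t \<in> {1..int T} \<Longrightarrow> \<bar>w t \<bullet> a\<bar> \<le> R"
    and b: "\<And>t. t \<in> {1..int T} \<Longrightarrow> \<bar>w t \<bullet> b\<bar> \<le> R"
  shows "m * lambda_min (Wmat T w) * (norm (a - b))\<^sup>2 \<le> (Fop g T w yv a - Fop g T w yv b) \<bullet> (a - b)"
proof -
  have "m * lambda_min (Wmat T w) * (norm (a - b))\<^sup>2 \<le> m * ((a - b) \<bullet> (Wmat T w *v (a - b)))"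
    unfolding mult.assoc using \<open>0 \<le> m\<close>
    by (intro mult_left_mono lambda_min_mult_norm_square_le transpose_Wmat)
  also have "\<dots> = (1 / real T) * (\<Sum>t\<in>{1..int T}. m * (w t \<bullet> (a - b))\<^sup>2)"
    by (simp add: Wmat_quadratic_form sum_distrib_left)
  also have "\<dots> \<le> (1 / real T) * (\<Sum>t\<in>{1..int T}. (g (w t \<bullet> a) - g (w t \<bullet> b)) * (w t \<bullet> (a - b)))"
  proof (intro mult_left_mono sum_mono)
    fix t assume t: "t \<in> {1..int T}"
    show "m * (w t \<bullet> (a - b))\<^sup>2 \<le> (g (w t \<bullet> a) - g (w t \<bullet> b)) * (w t \<bullet> (a - b))"
      using mono_deriv_lower_bound_imp_strongly_monotone[OF assms(1-3) a[OF t] b[OF t]]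
      by (simp add: inner_diff_right)
  qed simp
  also have "\<dots> = (Fop g T w yv a - Fop g T w yv b) \<bullet> (a - b)"
    by (rule Fop_diff_inner[symmetric])
  finally show ?thesis .
qed

lemma abs_inner_le_l1norm:
  fixes w \<theta> :: "real^'n"
  assumes "\<And>n. \<bar>w $ n\<bar> \<le> B"
  shows "\<bar>w \<bullet> \<theta>\<bar> \<le> B * l1norm \<theta>"
proof -
  have "\<bar>w \<bullet> \<theta>\<bar> = \<bar>\<Sum>k\<in>UNIV. w $ k * \<theta> $ k\<bar>" by (simp add: inner_vec_def)
  also have "\<dots> \<le> (\<Sum>k\<in>UNIV. \<bar>w $ k * \<theta> $ k\<bar>)" by (rule sum_abs)
  also have "\<dots> \<le> (\<Sum>k\<in>UNIV. B * \<bar>\<theta> $ k\<bar>)"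
    using assms by (intro sum_mono) (simp add: abs_mult mult_right_mono)
  also have "\<dots> = B * l1norm \<theta>" by (simp add: l1norm_def sum_distrib_left)
  finally show ?thesis .
qed

lemma bdd_above_l1norm_compact:
  fixes \<Theta> :: "(real^'n) set"
  assumes "compact \<Theta>"
  shows "bdd_above (l1norm ` \<Theta>)"
proof -
  obtain B where B: "\<And>\<theta>. \<theta> \<in> \<Theta> \<Longrightarrow> norm \<theta> \<le> B"
    using compact_imp_bounded[OF assms] bounded_iff by blast
  have "l1norm \<theta> \<le> real CARD('n) * B" if "\<theta> \<in> \<Theta>" for \<theta>
  proof -
    have "l1norm \<theta> \<le> (\<Sum>k\<in>(UNIV::'n set). B)" unfolding l1norm_def
      by (intro sum_mono) (meson B that component_le_norm_cart order_trans)
    then show ?thesis by simp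
  qed
  then show ?thesis by (intro bdd_aboveI2)
qed

lemma weak_VI_solution_error_le:
  fixes w :: "int \<Rightarrow> real^'n" and \<Theta> :: "(real^'n) set"
  assumes "mono g" and "\<And>u. (g has_real_derivative g' u) (at u)"
    and lower: "\<And>u. \<bar>u\<bar> \<le> B * (SUP \<theta>\<in>\<Theta>. l1norm \<theta>) \<Longrightarrow> m \<le> \<bar>g' u\<bar>" and "0 \<le> m"
    and w: "\<And>t n. t \<in> {1..int T} \<Longrightarrow> \<bar>w t $ n\<bar> \<le> B" and "0 \<le> B"
    and \<Theta>: "convex \<Theta>" "compact \<Theta>" and mem: "\<theta>s \<in> \<Theta>" "\<theta>h \<in> \<Theta>"
    and weak: "\<And>\<theta>. \<theta> \<in> \<Theta> \<Longrightarrow> 0 \<le> Fop g T w yv \<theta> \<bullet> (\<theta> - \<theta>h)"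
  shows "m * lambda_min (Wmat T w) * norm (\<theta>h - \<theta>s) \<le> norm (Fop g T w yv \<theta>s)"
proof (rule strongly_monotone_weak_solution_dist_le[OF \<Theta>(1) mem _ weak])
  have "\<bar>w t \<bullet> \<theta>\<bar> \<le> B * (SUP \<theta>\<in>\<Theta>. l1norm \<theta>)" if "\<theta> \<in> \<Theta>" "t \<in> {1..int T}" for \<theta> t
  proof -
    have "\<bar>w t \<bullet> \<theta>\<bar> \<le> B * l1norm \<theta>" using w that by (intro abs_inner_le_l1norm)
    also have "\<dots> \<le> B * (SUP \<theta>\<in>\<Theta>. l1norm \<theta>)"
      using \<open>0 \<le> B\<close> bdd_above_l1norm_compact[OF \<Theta>(2)] that by (intro mult_left_mono cSUP_upper)
    finally show ?thesis .
  qed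
  then show "m * lambda_min (Wmat T w) * (norm (a - b))\<^sup>2 \<le> (Fop g T w yv a - Fop g T w yv b) \<bullet> (a - b)"
    if "a \<in> \<Theta>" "b \<in> \<Theta>" for a b
    using that by (intro Fop_strongly_monotone[OF assms(1,2) lower \<open>0 \<le> m\<close>])
qed

section \<open>The natural filtration of the observations\<close>

lemma space_past_sigma [simp]: "space (past_sigma M N1 N2 N3 d z x y s) = space M"
  unfolding past_sigma_def by (rule space_measure_of_conv)

lemma sets_past_sigma:
  "sets (past_sigma M N1 N2 N3 d z x y s) =
    sigma_sets (space M) {X -` B \<inter> space M | X B. X \<in> obs_vars N1 N2 N3 d z x y s \<and> B \<in> sets borel}"
  unfolding past_sigma_def by (rule sets_measure_of) auto

lemma measurable_past_sigma_obs_vars: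
  assumes "X \<in> obs_vars N1 N2 N3 d z x y s"
  shows "X \<in> borel_measurable (past_sigma M N1 N2 N3 d z x y s)"
proof (rule measurableI)
  fix B :: "real set" assume "B \<in> sets borel"
  then show "X -` B \<inter> space (past_sigma M N1 N2 N3 d z x y s) \<in> sets (past_sigma M N1 N2 N3 d z x y s)"
    using assms unfolding space_past_sigma sets_past_sigma by (intro sigma_sets.Basic) blast
qed auto

lemma obs_vars_mono: "s \<le> s' \<Longrightarrow> obs_vars N1 N2 N3 d z x y s \<subseteq> obs_vars N1 N2 N3 d z x y s'"
  unfolding obs_vars_def by fastforce

lemma subalgebra_past_sigma:
  assumes "\<forall>a\<in>{1..N3}. z a \<in> borel_measurable M"
    and "\<forall>j\<in>{1..N2}. \<forall>t\<in>{1 - int d..int T}. x j t \<in> borel_measurable M"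
    and "\<forall>k\<in>{1..N1}. \<forall>t\<in>{1 - int d..int T}. y k t \<in> borel_measurable M"
    and "s \<le> int T"
  shows "subalgebra M (past_sigma M N1 N2 N3 d z x y s)"
proof -
  have meas: "X \<in> borel_measurable M" if "X \<in> obs_vars N1 N2 N3 d z x y s" for X
    using that assms unfolding obs_vars_def by auto
  show ?thesis
    unfolding subalgebra_def space_past_sigma sets_past_sigma
  proof (intro conjI refl sets.sigma_sets_subset subsetI)
    fix A assume "A \<in> {X -` B \<inter> space M | X B. X \<in> obs_vars N1 N2 N3 d z x y s \<and> B \<in> sets borel}"
    then obtain X B where "A = X -` B \<inter> space M" "X \<in> obs_vars N1 N2 N3 d z x y s" "B \<in> sets borel"
      by blast
    then show "A \<in> sets M" using meas by (simp add: measurable_sets)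
  qed
qed

lemma lagged_index_mem:
  fixes j d K :: nat and t :: int
  assumes "j < d * K"
  shows "j div d + 1 \<in> {1..K}" and "t - int (j mod d + 1) \<in> {t - int d..t - 1}"
proof -
  have "0 < d" using assms by (cases "d = 0") auto
  then have "j mod d < d" by simp
  then show "t - int (j mod d + 1) \<in> {t - int d..t - 1}" by auto
  show "j div d + 1 \<in> {1..K}" using less_mult_imp_div_less[of j K d] assms by (simp add: mult.commute)
qed

lemma wcoord_in_obs_vars:
  assumes "1 \<le> t" and "0 < k" and "k < dimN N1 N2 N3 d"
  shows "(\<lambda>\<omega>. wcoord N1 N2 N3 d z x y t \<omega> k) \<in> obs_vars N1 N2 N3 d z x y (t - 1)"
proof -
  consider "k \<le> N3" | "N3 < k" "k \<le> N3 + d * N2" | "N3 + d * N2 < k" by linarith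
  then show ?thesis
  proof cases
    case 1
    then show ?thesis using assms by (auto simp: wcoord_def obs_vars_def)
  next
    case 2
    define j where "j = k - N3 - 1"
    have "j < d * N2" using 2 by (simp add: j_def)
    then have "j div d + 1 \<in> {1..N2}" "t - int (j mod d + 1) \<in> {1 - int d..t - 1}"
      using lagged_index_mem(1) lagged_index_mem(2)[of j d N2 t] assms(1) by auto
    moreover have "(\<lambda>\<omega>. wcoord N1 N2 N3 d z x y t \<omega> k) = x (j div d + 1) (t - int (j mod d + 1))"
      using 2 assms by (simp add: wcoord_def j_def fun_eq_iff)
    ultimately show ?thesis unfolding obs_vars_def by blast
  next
    case 3
    define j where "j = k - N3 - d * N2 - 1"
    have "j < d * N1" using 3 assms by (simp add: j_def dimN_def)
    then have "j div d + 1 \<in> {1..N1}" "t - int (j mod d + 1) \<in> {1 - int d..t - 1}"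
      using lagged_index_mem(1) lagged_index_mem(2)[of j d N1 t] assms(1) by auto
    moreover have "(\<lambda>\<omega>. wcoord N1 N2 N3 d z x y t \<omega> k) = y (j div d + 1) (t - int (j mod d + 1))"
      using 3 assms by (simp add: wcoord_def j_def fun_eq_iff)
    ultimately show ?thesis unfolding obs_vars_def by blast
  qed
qed

lemma measurable_wvec_past_sigma:
  assumes "bij_betw idx UNIV {..<dimN N1 N2 N3 d}" and "1 \<le> t" and "t - 1 \<le> s"
  shows "(\<lambda>\<omega>. wvec idx N1 N2 N3 d z x y t \<omega> $ n) \<in> borel_measurable (past_sigma M N1 N2 N3 d z x y s)"
proof (cases "idx n = 0")
  case False
  have "idx n < dimN N1 N2 N3 d" using assms(1) by (auto simp: bij_betw_def)
  then have "(\<lambda>\<omega>. wcoord N1 N2 N3 d z x y t \<omega> (idx n)) \<in> obs_vars N1 N2 N3 d z x y s"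
    using wcoord_in_obs_vars[OF assms(2)] obs_vars_mono[OF assms(3)] False by blast
  then show ?thesis unfolding wvec_def by (simp add: measurable_past_sigma_obs_vars)
qed (simp add: wvec_def wcoord_def)

section \<open>Concentration of the empirical operator at the true parameter\<close>

lemma norm_le_sqrt_card_mult:
  fixes v :: "real^'n"
  assumes "\<And>n. \<bar>v $ n\<bar> \<le> B"
  shows "norm v \<le> sqrt (real CARD('n)) * B"
proof -
  have "0 \<le> B" using assms order_trans abs_ge_zero by blast
  have "norm v = sqrt (\<Sum>n\<in>UNIV. (v $ n)\<^sup>2)" by (simp add: norm_vec_def L2_set_def)
  also have "\<dots> \<le> sqrt (\<Sum>n\<in>(UNIV::'n set). B\<^sup>2)"
  proof (intro real_sqrt_le_mono sum_mono)
    fix n :: 'n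
    show "(v $ n)\<^sup>2 \<le> B\<^sup>2" using power_mono[OF assms[of n] abs_ge_zero, of 2] by simp
  qed
  also have "\<dots> = sqrt (real CARD('n)) * B" using \<open>0 \<le> B\<close> by (simp add: real_sqrt_mult)
  finally show ?thesis .
qed

lemma (in prob_space) union_bound_event:
  fixes B :: "'i::finite \<Rightarrow> 'a set"
  assumes "AE \<omega> in M. P \<omega>" and "\<And>i. B i \<in> events" and "(\<Sum>i\<in>UNIV. prob (B i)) \<le> \<epsilon>"
  shows "\<exists>A\<in>events. 1 - \<epsilon> \<le> prob A \<and> (\<forall>\<omega>\<in>A. P \<omega> \<and> (\<forall>i. \<omega> \<notin> B i))"
proof -
  obtain N0 where N0: "{\<omega> \<in> space M. \<not> P \<omega>} \<subseteq> N0" "emeasure M N0 = 0" "N0 \<in> events"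
    using assms(1) by (rule AE_E)
  define Bad where "Bad = N0 \<union> (\<Union>i. B i)"
  have Bad: "Bad \<in> events" unfolding Bad_def using N0(3) assms(2) by auto
  have "prob Bad \<le> prob N0 + prob (\<Union>i. B i)"
    unfolding Bad_def using N0(3) assms(2) by (intro measure_subadditive) (auto simp: emeasure_finite)
  also have "prob (\<Union>i. B i) \<le> (\<Sum>i\<in>UNIV. prob (B i))"
    using assms(2) finite_measure_subadditive_finite[of UNIV B] by auto
  finally have "prob Bad \<le> \<epsilon>" using N0(2) assms(3) by (simp add: emeasure_eq_measure)
  then have "1 - \<epsilon> \<le> prob (space M - Bad)" using prob_compl[OF Bad] by simp
  moreover have "P \<omega> \<and> (\<forall>i. \<omega> \<notin> B i)" if "\<omega> \<in> space M - Bad" for \<omega>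
    using that N0(1) by (auto simp: Bad_def)
  ultimately show ?thesis using Bad by blast
qed

locale binary_glm_network = prob_space M for M :: "'a measure" +
  fixes idx :: "'n::finite \<Rightarrow> nat" and N1 N2 N3 d T :: nat
    and z :: "nat \<Rightarrow> 'a \<Rightarrow> real" and x y :: "nat \<Rightarrow> int \<Rightarrow> 'a \<Rightarrow> real"
    and g :: "real \<Rightarrow> real" and \<theta>true :: "nat \<Rightarrow> real^'n" and M_w :: real
  assumes idx: "bij_betw idx UNIV {..<dimN N1 N2 N3 d}"
    and meas_z: "\<forall>a\<in>{1..N3}. z a \<in> borel_measurable M"
    and meas_x: "\<forall>j\<in>{1..N2}. \<forall>t\<in>{1 - int d..int T}. x j t \<in> borel_measurable M"
    and meas_y: "\<forall>k\<in>{1..N1}. \<forall>t\<in>{1 - int d..int T}. y k t \<in> borel_measurable M"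
    and binary: "\<forall>k\<in>{1..N1}. \<forall>t\<in>{1 - int d..int T}. \<forall>\<omega>\<in>space M. y k t \<omega> \<in> {0, 1}"
    and g_range: "\<forall>u. 0 \<le> g u \<and> g u \<le> 1"
    and g_cont: "continuous_on UNIV g"
    and model: "\<forall>k\<in>{1..N1}. \<forall>t\<in>{1..int T}. AE \<omega> in M.
        real_cond_exp M (past_sigma M N1 N2 N3 d z x y (t - 1))
          (indicator {\<omega>\<in>space M. y k t \<omega> = 1}) \<omega>
        = g (wvec idx N1 N2 N3 d z x y t \<omega> \<bullet> \<theta>true k)"
    and Mw_pos: "0 < M_w"
    and w_bound: "\<forall>t\<in>{1..int T}. AE \<omega> in M. \<forall>n. \<bar>wvec idx N1 N2 N3 d z x y t \<omega> $ n\<bar> \<le> M_w"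
begin

abbreviation regressor :: "int \<Rightarrow> 'a \<Rightarrow> real^'n"
  where "regressor t \<omega> \<equiv> wvec idx N1 N2 N3 d z x y t \<omega>"

abbreviation past :: "int \<Rightarrow> 'a measure"
  where "past s \<equiv> past_sigma M N1 N2 N3 d z x y s"

definition score :: "nat \<Rightarrow> 'n \<Rightarrow> 'a \<Rightarrow> real"
  where "score i n \<omega> = (\<Sum>t\<in>{1..int T}. regressor t \<omega> $ n * (y i t \<omega> - g (regressor t \<omega> \<bullet> \<theta>true i)))"

lemma regressor_predictable:
  "1 \<le> s \<Longrightarrow> s \<le> t \<Longrightarrow> (\<lambda>\<omega>. regressor s \<omega> $ n) \<in> borel_measurable (past (t - 1))"
  by (rule measurable_wvec_past_sigma[OF idx]) auto

lemma link_predictable: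
  assumes "1 \<le> s" "s \<le> t"
  shows "(\<lambda>\<omega>. g (regressor s \<omega> \<bullet> \<theta>)) \<in> borel_measurable (past (t - 1))"
proof -
  have [measurable]: "g \<in> borel_measurable borel" using g_cont by (rule borel_measurable_continuous_onI)
  have [measurable]: "(\<lambda>\<omega>. regressor s \<omega> $ n) \<in> borel_measurable (past (t - 1))" for n
    using assms by (rule regressor_predictable)
  show ?thesis unfolding inner_vec_def by measurable
qed

lemma conditional_bernoulli_process_response:
  assumes "i \<in> {1..N1}"
  shows "conditional_bernoulli_process M past (y i) (\<lambda>t \<omega>. g (regressor t \<omega> \<bullet> \<theta>true i)) T"
proof unfold_locales
  fix t assume t: "t \<in> {1..int T}"
  show "subalgebra M (past (t - 1))"
    using t by (intro subalgebra_past_sigma[OF meas_z meas_x meas_y]) auto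
  show "y i t \<in> borel_measurable M" using meas_y assms t by auto
  show "AE \<omega> in M. real_cond_exp M (past (t - 1)) (indicator {\<omega> \<in> space M. y i t \<omega> = 1}) \<omega>
      = g (regressor t \<omega> \<bullet> \<theta>true i)"
    using model assms t by auto
  fix \<omega> assume "\<omega> \<in> space M"
  then show "y i t \<omega> \<in> {0, 1}" using binary assms t by auto
  show "0 \<le> g (regressor t \<omega> \<bullet> \<theta>true i) \<and> g (regressor t \<omega> \<bullet> \<theta>true i) \<le> 1" using g_range by auto
next
  fix s t :: int assume "1 \<le> s" "s < t" "t \<le> int T"
  then show "y i s \<in> borel_measurable (past (t - 1))"
    using assms by (intro measurable_past_sigma_obs_vars) (auto simp: obs_vars_def)
next
  fix s t :: int assume "1 \<le> s" "s \<le> t"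
  then show "(\<lambda>\<omega>. g (regressor s \<omega> \<bullet> \<theta>true i)) \<in> borel_measurable (past (t - 1))"
    by (rule link_predictable)
qed

lemma AE_regressor_bound:
  assumes "t \<in> {1..int T}"
  shows "AE \<omega> in M. \<bar>regressor t \<omega> $ n\<bar> \<le> M_w"
proof -
  have "AE \<omega> in M. \<forall>n. \<bar>regressor t \<omega> $ n\<bar> \<le> M_w" using w_bound assms by blast
  then show ?thesis by eventually_elim blast
qed

lemma borel_measurable_score:
  assumes "i \<in> {1..N1}"
  shows "score i n \<in> borel_measurable M"
proof -
  interpret conditional_bernoulli_process M past "y i" "\<lambda>t \<omega>. g (regressor t \<omega> \<bullet> \<theta>true i)" T
    using assms by (rule conditional_bernoulli_process_response)
  show ?thesis
    unfolding score_def using regressor_predictable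
    by (rule borel_measurable_weighted_sum)
qed

lemma score_tail_le:
  assumes "i \<in> {1..N1}" and "0 < a"
  shows "prob {\<omega> \<in> space M. a \<le> \<bar>score i n \<omega>\<bar>} \<le> 2 * exp (- 2 * a\<^sup>2 / (real T * M_w\<^sup>2))"
proof -
  interpret conditional_bernoulli_process M past "y i" "\<lambda>t \<omega>. g (regressor t \<omega> \<bullet> \<theta>true i)" T
    using assms(1) by (rule conditional_bernoulli_process_response)
  show ?thesis
    unfolding score_def using regressor_predictable AE_regressor_bound Mw_pos assms(2)
    by (intro weighted_sum_abs_tail_le) auto
qed

lemma Fop_true_nth:
  "Fop g T (\<lambda>t. regressor t \<omega>) (\<lambda>t. y i t \<omega>) (\<theta>true i) $ n = - score i n \<omega> / real T"
  by (simp add: Fop_nth score_def sum_negf[symmetric] algebra_simps)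

lemma norm_Fop_true_le:
  assumes "\<And>n. \<bar>score i n \<omega>\<bar> \<le> a"
  shows "norm (Fop g T (\<lambda>t. regressor t \<omega>) (\<lambda>t. y i t \<omega>) (\<theta>true i))
    \<le> sqrt (real (dimN N1 N2 N3 d)) * (a / real T)"
proof -
  have "\<bar>Fop g T (\<lambda>t. regressor t \<omega>) (\<lambda>t. y i t \<omega>) (\<theta>true i) $ n\<bar> \<le> a / real T" for n
    using assms by (simp add: Fop_true_nth divide_right_mono)
  moreover have "CARD('n) = dimN N1 N2 N3 d" using bij_betw_same_card[OF idx] by simp
  ultimately show ?thesis using norm_le_sqrt_card_mult by metis
qed

lemma score_concentration:
  assumes i: "i \<in> {1..N1}" and "0 < T" and \<epsilon>: "0 < \<epsilon>" "\<epsilon> < 1"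
  shows "\<exists>A\<in>events. 1 - \<epsilon> \<le> prob A \<and> (\<forall>\<omega>\<in>A. (\<forall>t\<in>{1..int T}. \<forall>n. \<bar>regressor t \<omega> $ n\<bar> \<le> M_w) \<and>
    norm (Fop g T (\<lambda>t. regressor t \<omega>) (\<lambda>t. y i t \<omega>) (\<theta>true i))
      \<le> M_w * sqrt (real (dimN N1 N2 N3 d) * ln (2 * real (dimN N1 N2 N3 d) / \<epsilon>) / real T))"
proof -
  define N where "N = real (dimN N1 N2 N3 d)"
  define L where "L = ln (2 * N / \<epsilon>)"
  define a where "a = M_w * sqrt (real T * L)"
  \<comment> \<open>chosen so that each coordinate tail 2 exp (- 2 a^2 / (T M_w^2)) = 2 exp (- 2 L) is below \<epsilon> / N\<close>
  have card: "real CARD('n) = N" using bij_betw_same_card[OF idx] by (simp add: N_def)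
  have "1 \<le> N" by (simp add: N_def dimN_def)
  then have "0 < L" using \<epsilon> by (simp add: L_def)
  then have "0 < a" using Mw_pos \<open>0 < T\<close> by (simp add: a_def)
  have tail: "prob {\<omega> \<in> space M. a \<le> \<bar>score i n \<omega>\<bar>} \<le> \<epsilon> / N" for n
  proof -
    have "- 2 * a\<^sup>2 / (real T * M_w\<^sup>2) = - 2 * L"
      using Mw_pos \<open>0 < T\<close> \<open>0 < L\<close> by (simp add: a_def power_mult_distrib)
    then have "prob {\<omega> \<in> space M. a \<le> \<bar>score i n \<omega>\<bar>} \<le> 2 * exp (- 2 * L)"
      using score_tail_le[OF i \<open>0 < a\<close>] by simp
    also have "\<dots> \<le> 2 * exp (- L)" using \<open>0 < L\<close> by simp
    also have "\<dots> = \<epsilon> / N" using \<epsilon> \<open>1 \<le> N\<close> by (simp add: L_def exp_minus)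
    finally show ?thesis .
  qed
  have "\<exists>A\<in>events. 1 - \<epsilon> \<le> prob A \<and> (\<forall>\<omega>\<in>A. (\<forall>t\<in>{1..int T}. \<forall>n. \<bar>regressor t \<omega> $ n\<bar> \<le> M_w)
      \<and> (\<forall>n. \<omega> \<notin> {\<omega> \<in> space M. a \<le> \<bar>score i n \<omega>\<bar>}))"
  proof (rule union_bound_event)
    show "AE \<omega> in M. \<forall>t\<in>{1..int T}. \<forall>n. \<bar>regressor t \<omega> $ n\<bar> \<le> M_w"
      using w_bound by (intro eventually_ball_finite) auto
    show "{\<omega> \<in> space M. a \<le> \<bar>score i n \<omega>\<bar>} \<in> events" for n
      using borel_measurable_score[OF i] by measurable
    have "(\<Sum>n\<in>UNIV. prob {\<omega> \<in> space M. a \<le> \<bar>score i n \<omega>\<bar>}) \<le> (\<Sum>n\<in>(UNIV::'n set). \<epsilon> / N)"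
      by (intro sum_mono tail)
    then show "(\<Sum>n\<in>UNIV. prob {\<omega> \<in> space M. a \<le> \<bar>score i n \<omega>\<bar>}) \<le> \<epsilon>"
      using card \<open>1 \<le> N\<close> by simp
  qed
  then obtain A where A: "A \<in> events" "1 - \<epsilon> \<le> prob A"
    and good: "\<And>\<omega>. \<omega> \<in> A \<Longrightarrow> (\<forall>t\<in>{1..int T}. \<forall>n. \<bar>regressor t \<omega> $ n\<bar> \<le> M_w)
      \<and> (\<forall>n. \<omega> \<notin> {\<omega> \<in> space M. a \<le> \<bar>score i n \<omega>\<bar>})"
    by blast
  have norm_bound: "norm (Fop g T (\<lambda>t. regressor t \<omega>) (\<lambda>t. y i t \<omega>) (\<theta>true i)) \<le> M_w * sqrt (N * L / real T)"
    if "\<omega> \<in> space M" "\<forall>n. \<omega> \<notin> {\<omega> \<in> space M. a \<le> \<bar>score i n \<omega>\<bar>}" for \<omega>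
  proof -
    have "\<bar>score i n \<omega>\<bar> \<le> a" for n using that(1) that(2)[rule_format, of n] by auto
    then have "norm (Fop g T (\<lambda>t. regressor t \<omega>) (\<lambda>t. y i t \<omega>) (\<theta>true i)) \<le> sqrt N * (a / real T)"
      unfolding N_def by (rule norm_Fop_true_le)
    also have "\<dots> = M_w * sqrt (N * L / real T)"
      using \<open>0 < T\<close> \<open>0 < L\<close> by (simp add: a_def real_sqrt_mult real_sqrt_divide field_simps)
    finally show ?thesis .
  qed
  show ?thesis
    using A good norm_bound sets.sets_into_space[OF A(1)] unfolding N_def L_def by blast
qed

end

theorem theorem1:
  fixes M :: "'a measure"
    and g g' :: "real \<Rightarrow> real" and m_g M_g M_w \<epsilon> :: real
    and N1 N2 N3 d T i :: nat
    and idx :: "'n::finite \<Rightarrow> nat"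
    and z :: "nat \<Rightarrow> 'a \<Rightarrow> real"
    and x y :: "nat \<Rightarrow> int \<Rightarrow> 'a \<Rightarrow> real"
    and \<theta>true :: "nat \<Rightarrow> real^'n"
    and \<Theta> :: "(real^'n) set"
    and \<theta>hat :: "'a \<Rightarrow> real^'n"
  assumes P: "prob_space M"
    and idx: "bij_betw idx UNIV {..<dimN N1 N2 N3 d}"
    and meas_z: "\<forall>a\<in>{1..N3}. z a \<in> borel_measurable M"
    and meas_x: "\<forall>j\<in>{1..N2}. \<forall>t\<in>{1 - int d..int T}. x j t \<in> borel_measurable M"
    and meas_y: "\<forall>k\<in>{1..N1}. \<forall>t\<in>{1 - int d..int T}. y k t \<in> borel_measurable M"
    and binary: "\<forall>k\<in>{1..N1}. \<forall>t\<in>{1 - int d..int T}. \<forall>\<omega>\<in>space M. y k t \<omega> \<in> {0, 1}"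
    and g_range: "\<forall>u. 0 \<le> g u \<and> g u \<le> 1"
    and g_cont: "continuous_on UNIV g"
    and g_mono: "mono g"
    and g_deriv: "\<forall>u. (g has_real_derivative g' u) (at u)"
    and mg_pos: "0 < m_g" and Mg_pos: "0 < M_g"
    and g'_upper: "\<forall>u. \<bar>g' u\<bar> \<le> M_g"
    and g'_lower: "\<forall>u. \<bar>u\<bar> \<le> M_w * (SUP \<theta>\<in>\<Theta>. l1norm \<theta>) \<longrightarrow> m_g \<le> \<bar>g' u\<bar>"
    and model: "\<forall>k\<in>{1..N1}. \<forall>t\<in>{1..int T}. AE \<omega> in M.
        real_cond_exp M (past_sigma M N1 N2 N3 d z x y (t - 1))
          (indicator {\<omega>\<in>space M. y k t \<omega> = 1}) \<omega>
        = g (wvec idx N1 N2 N3 d z x y t \<omega> \<bullet> \<theta>true k)"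
    and Mw_pos: "0 < M_w"
    and w_bound: "\<forall>t\<in>{1..int T}. AE \<omega> in M. \<forall>n. \<bar>wvec idx N1 N2 N3 d z x y t \<omega> $ n\<bar> \<le> M_w"
    and i: "i \<in> {1..N1}"
    and \<Theta>_convex: "convex \<Theta>" and \<Theta>_compact: "compact \<Theta>"
    and true_in: "\<theta>true i \<in> \<Theta>"
    and weak_VI: "\<forall>\<omega>\<in>space M. \<theta>hat \<omega> \<in> \<Theta> \<and>
        (\<forall>\<theta>\<in>\<Theta>. Fop g T (\<lambda>t. wvec idx N1 N2 N3 d z x y t \<omega>) (\<lambda>t. y i t \<omega>) \<theta>
                    \<bullet> (\<theta> - \<theta>hat \<omega>) \<ge> 0)"
    and T_pos: "T \<ge> 1"
    and eps: "0 < \<epsilon>" "\<epsilon> < 1"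
  shows "\<exists>A\<in>sets M. measure M A \<ge> 1 - \<epsilon> \<and>
    (\<forall>\<omega>\<in>A. let lam1 = lambda_min (Wmat T (\<lambda>t. wvec idx N1 N2 N3 d z x y t \<omega>)) in
       lam1 > 0 \<longrightarrow>
       norm (\<theta>hat \<omega> - \<theta>true i)
         \<le> M_w / (m_g * lam1) * sqrt (real (dimN N1 N2 N3 d)
              * ln (2 * real (dimN N1 N2 N3 d) / \<epsilon>) / real T))"
proof -
  interpret binary_glm_network M idx N1 N2 N3 d T z x y g \<theta>true M_w
    using P idx meas_z meas_x meas_y binary g_range g_cont model Mw_pos w_bound
    by (simp add: binary_glm_network_def binary_glm_network_axioms_def)
  obtain A where A: "A \<in> sets M" "1 - \<epsilon> \<le> measure M A"
    and good: "\<And>\<omega>. \<omega> \<in> A \<Longrightarrow> (\<forall>t\<in>{1..int T}. \<forall>n. \<bar>regressor t \<omega> $ n\<bar> \<le> M_w) \<and>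
      norm (Fop g T (\<lambda>t. regressor t \<omega>) (\<lambda>t. y i t \<omega>) (\<theta>true i))
        \<le> M_w * sqrt (real (dimN N1 N2 N3 d) * ln (2 * real (dimN N1 N2 N3 d) / \<epsilon>) / real T)"
    using score_concentration[OF i _ eps] T_pos by auto
  show ?thesis
  proof (intro bexI[OF _ A(1)] conjI A(2) ballI, unfold Let_def, intro impI)
    fix \<omega> assume "\<omega> \<in> A" and lam: "0 < lambda_min (Wmat T (\<lambda>t. regressor t \<omega>))"
    have "\<omega> \<in> space M" using \<open>\<omega> \<in> A\<close> A(1) sets.sets_into_space by blast
    have "m_g * lambda_min (Wmat T (\<lambda>t. regressor t \<omega>)) * norm (\<theta>hat \<omega> - \<theta>true i)
        \<le> norm (Fop g T (\<lambda>t. regressor t \<omega>) (\<lambda>t. y i t \<omega>) (\<theta>true i))"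
      using g_mono g_deriv g'_lower mg_pos good[OF \<open>\<omega> \<in> A\<close>] Mw_pos \<Theta>_convex \<Theta>_compact true_in
        weak_VI \<open>\<omega> \<in> space M\<close>
      by (intro weak_VI_solution_error_le) auto
    also have "\<dots> \<le> M_w * sqrt (real (dimN N1 N2 N3 d) * ln (2 * real (dimN N1 N2 N3 d) / \<epsilon>) / real T)"
      using good[OF \<open>\<omega> \<in> A\<close>] by blast
    finally show "norm (\<theta>hat \<omega> - \<theta>true i) \<le> M_w / (m_g * lambda_min (Wmat T (\<lambda>t. regressor t \<omega>)))
        * sqrt (real (dimN N1 N2 N3 d) * ln (2 * real (dimN N1 N2 N3 d) / \<epsilon>) / real T)"
      using mg_pos lam by (simp add: field_simps)
  qed
qed

end
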